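(* Let $\bm\delta=(\delta_1,\dots,\delta_4)$ be fixed positive reals and let $R_1,\dots,R_5\subseteq\mathbb{R}^2$ with $|R_i|\le n$ for every $i\in[5]$. If the number of pairs $(r_1,r_2)\in R_1\times R_2$ with $\|r_1-r_2\|=\delta_1$ is $O(n)$, or the number of pairs $(r_4,r_5)\in R_4\times R_5$ with $\|r_4-r_5\|=\delta_4$ is $O(n)$, then $C_4(R_1,\dots,R_5)=O\left(n\cdot u_2(n,n)\right)$.
   Context: For sets $P_1,\dots,P_5\subseteq\mathbb{R}^2$, $C_4(P_1,\dots,P_5)$ is the number of $5$-tuples $(p_1,\dots,p_5)$ with $p_i\in P_i$, $\|p_i-p_{i+1}\|=\delta_i$ for $i\in[4]$, and $p_i\ne p_j$ for $i\ne j$. $u_2(m,n)$ denotes the maximum, over sets $A$ of $m$ points and $B$ of $n$ points in $\mathbb{R}^2$, of the number of pairs $(a,b)\in A\times B$ at a given fixed distance (the maximum number of incidences between $m$ points and $n$ circles of a fixed radius). *)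

theory Defs
  imports "HOL-Analysis.Analysis"
begin

type_synonym pt = "real ^ 2"

definition dist_pairs :: "real \<Rightarrow> pt set \<Rightarrow> pt set \<Rightarrow> nat" where
  "dist_pairs d A B = card {(a, b). a \<in> A \<and> b \<in> B \<and> norm (a - b) = d}"

definition C4 :: "real \<Rightarrow> real \<Rightarrow> real \<Rightarrow> real \<Rightarrow>
    pt set \<Rightarrow> pt set \<Rightarrow> pt set \<Rightarrow> pt set \<Rightarrow> pt set \<Rightarrow> nat" where
  "C4 d1 d2 d3 d4 P1 P2 P3 P4 P5 = card {(p1, p2, p3, p4, p5).
      p1 \<in> P1 \<and> p2 \<in> P2 \<and> p3 \<in> P3 \<and> p4 \<in> P4 \<and> p5 \<in> P5 \<and>
      norm (p1 - p2) = d1 \<and> norm (p2 - p3) = d2 \<and> norm (p3 - p4) = d3 \<and> norm (p4 - p5) = d4 \<and>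
      distinct [p1, p2, p3, p4, p5]}"

text \<open>u_2(m,n): maximum number of unit-distance pairs between m points and n points in the
  plane (by scaling, the same for any fixed positive distance).\<close>
definition u2 :: "nat \<Rightarrow> nat \<Rightarrow> nat" where
  "u2 m n = Sup {dist_pairs 1 A B | A B. finite A \<and> card A = m \<and> finite B \<and> card B = n}"

end

theory Submission
  imports Defs
begin

text \<open>A path \<open>p\<^sub>1 \<dots> p\<^sub>5\<close> counted by \<open>C\<^sub>4\<close> is determined, up to two choices, by its end
  edges \<open>(p\<^sub>1, p\<^sub>2)\<close> and \<open>(p\<^sub>4, p\<^sub>5)\<close>: the middle point \<open>p\<^sub>3\<close> lies on the circle of radius
  \<open>\<delta>\<^sub>2\<close> around \<open>p\<^sub>2\<close> and on the circle of radius \<open>\<delta>\<^sub>3\<close> around \<open>p\<^sub>4 \<noteq> p\<^sub>2\<close>, and two circles with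
  distinct centres meet in at most two points. Hence \<open>C\<^sub>4\<close> is at most twice the product of
  the numbers of \<open>\<delta>\<^sub>1\<close>-pairs in \<open>R\<^sub>1 \<times> R\<^sub>2\<close> and of \<open>\<delta>\<^sub>4\<close>-pairs in \<open>R\<^sub>4 \<times> R\<^sub>5\<close>. One factor is
  \<open>O(n)\<close> by hypothesis; after rescaling the distance to 1, the other is at most \<open>u\<^sub>2(n, n)\<close>.\<close>

definition cross2 :: "pt \<Rightarrow> pt \<Rightarrow> real" where
  "cross2 x y = x$1 * y$2 - x$2 * y$1"

lemma cross2_diff_left: "cross2 (x - x') y = cross2 x y - cross2 x' y"
  by (simp add: cross2_def algebra_simps)

lemma cross2_sq_plus_inner_sq: "(cross2 x y)\<^sup>2 + (x \<bullet> y)\<^sup>2 = (norm x)\<^sup>2 * (norm y)\<^sup>2"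
  unfolding cross2_def dot_square_norm[symmetric] by (simp add: inner_vec_def sum_2) algebra

lemma eq_if_inner_cross2_eq:
  assumes "y \<noteq> 0" and "x \<bullet> y = x' \<bullet> y" and "cross2 x y = cross2 x' y"
  shows "x = x'"
proof -
  have "(norm (x - x'))\<^sup>2 * (norm y)\<^sup>2 = 0"
    using cross2_sq_plus_inner_sq[of "x - x'" y] assms(2,3)
    by (simp add: cross2_diff_left inner_diff_left)
  with \<open>y \<noteq> 0\<close> show ?thesis by simp
qed

lemma finite_card_two_circles_inter:
  fixes p q :: pt
  assumes "p \<noteq> q"
  shows "finite {x. norm (x - p) = a \<and> norm (x - q) = b}" (is "finite ?S")
    and "card {x. norm (x - p) = a \<and> norm (x - q) = b} \<le> 2"
proof -
  define u where "u = q - p"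
  define c where "c = (a\<^sup>2 + (norm u)\<^sup>2 - b\<^sup>2) / 2"
  define r where "r = sqrt (a\<^sup>2 * (norm u)\<^sup>2 - c\<^sup>2)"
  define f where "f x = cross2 (x - p) u" for x
  have "u \<noteq> 0" using assms by (simp add: u_def)
  have inner_eq: "(x - p) \<bullet> u = c" if "x \<in> ?S" for x
    using that dot_norm_neg[of "x - p" u] by (simp add: c_def u_def)
  \<comment> \<open>All of \<open>?S\<close> lies on the radical axis \<open>(x - p) \<bullet> u = c\<close>, so \<open>cross2 (x - p) u\<close>
    determines \<open>x\<close>; by Lagrange's identity it can only take the values \<open>\<plusminus>r\<close>.\<close>
  have "f ` ?S \<subseteq> {r, - r}"
  proof
    fix t assume "t \<in> f ` ?S"
    then obtain x where x: "x \<in> ?S" and t: "t = f x" by blast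
    have "t\<^sup>2 = a\<^sup>2 * (norm u)\<^sup>2 - c\<^sup>2"
      using cross2_sq_plus_inner_sq[of "x - p" u] inner_eq[OF x] x by (simp add: t f_def)
    then have "\<bar>t\<bar> = r" unfolding r_def by (metis real_sqrt_abs)
    then show "t \<in> {r, - r}" by auto
  qed
  moreover have "inj_on f ?S"
  proof (rule inj_onI)
    fix x y assume "x \<in> ?S" "y \<in> ?S" "f x = f y"
    then have "x - p = y - p"
      using eq_if_inner_cross2_eq[OF \<open>u \<noteq> 0\<close>] inner_eq by (simp add: f_def)
    then show "x = y" by simp
  qed
  ultimately show "finite ?S" and "card ?S \<le> 2"
    using inj_on_finite[of f ?S "{r, - r}"] card_inj_on_le[of f ?S "{r, - r}"]
      card_insert_le_m1[of 2 "{- r}" r] by auto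
qed

lemma finite_dist_pairs_set:
  "finite A \<Longrightarrow> finite B \<Longrightarrow> finite {(a, b). a \<in> A \<and> b \<in> B \<and> norm (a - b) = d}"
  by (rule finite_subset[of _ "A \<times> B"]) auto

lemma dist_pairs_mono:
  "finite A' \<Longrightarrow> finite B' \<Longrightarrow> A \<subseteq> A' \<Longrightarrow> B \<subseteq> B' \<Longrightarrow> dist_pairs d A B \<le> dist_pairs d A' B'"
  unfolding dist_pairs_def by (rule card_mono[OF finite_dist_pairs_set]) auto

lemma dist_pairs_le_card_mult: "finite A \<Longrightarrow> finite B \<Longrightarrow> dist_pairs d A B \<le> card A * card B"
  unfolding dist_pairs_def card_cartesian_product[symmetric] by (rule card_mono) auto

lemma dist_pairs_scaleR:
  fixes A B :: "pt set"
  assumes "c > 0"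
  shows "dist_pairs (c * d) (scaleR c ` A) (scaleR c ` B) = dist_pairs d A B"
proof -
  have "inj (scaleR c :: pt \<Rightarrow> pt)" using assms by (intro injI) simp
  then have inj: "inj_on (map_prod (scaleR c) (scaleR c)) X" for X :: "(pt \<times> pt) set"
    by (auto simp: inj_on_def inj_def)
  have "{(a, b). a \<in> scaleR c ` A \<and> b \<in> scaleR c ` B \<and> norm (a - b) = c * d}
      = map_prod (scaleR c) (scaleR c) ` {(a, b). a \<in> A \<and> b \<in> B \<and> norm (a - b) = d}"
    using assms by (auto simp: scaleR_diff_right[symmetric])
  then show ?thesis unfolding dist_pairs_def by (simp add: card_image[OF inj])
qed

lemma finite_superset_card_eq:
  fixes A :: "'a set"
  assumes "infinite (UNIV :: 'a set)" and "finite A" and "card A \<le> n"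
  obtains A' where "finite A'" "card A' = n" "A \<subseteq> A'"
proof -
  obtain B :: "'a set" where B: "finite B" "card B = n"
    using infinite_arbitrarily_large[OF assms(1)] by blast
  have "n \<le> card (A \<union> B)" using B assms(2) by (metis card_mono finite_UnI sup_ge2)
  then obtain A' where "A \<subseteq> A'" "A' \<subseteq> A \<union> B" "card A' = n"
    using exists_subset_between[of A n "A \<union> B"] assms B by auto
  then show ?thesis using that B assms(2) finite_subset by blast
qed

lemma dist_pairs_le_u2:
  assumes "d > 0" and "finite A" "card A \<le> n" and "finite B" "card B \<le> n"
  shows "dist_pairs d A B \<le> u2 n n"
proof -
  have inf: "infinite (UNIV :: pt set)" by (rule infinite_UNIV_vec) (rule infinite_UNIV_char_0)
  obtain A' where A': "finite A'" "card A' = n" "A \<subseteq> A'"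
    using finite_superset_card_eq[OF inf assms(2,3)] .
  obtain B' where B': "finite B'" "card B' = n" "B \<subseteq> B'"
    using finite_superset_card_eq[OF inf assms(4,5)] .
  let ?g = "scaleR (inverse d) :: pt \<Rightarrow> pt"
  have inj: "inj ?g" using assms(1) by (intro injI) simp
  let ?U = "{dist_pairs 1 A B |A B. finite A \<and> card A = n \<and> finite B \<and> card B = n}"
  have "dist_pairs 1 (?g ` A') (?g ` B') \<in> ?U"
  proof -
    have "card (?g ` A') = n" "card (?g ` B') = n"
      using A' B' card_image[OF inj_on_subset[OF inj]] by simp_all
    then show ?thesis using A'(1) B'(1) by blast
  qed
  moreover have "bdd_above ?U"
    by (rule bdd_aboveI[of _ "n * n"]) (use dist_pairs_le_card_mult in fastforce)
  ultimately have "dist_pairs 1 (?g ` A') (?g ` B') \<le> u2 n n"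
    unfolding u2_def by (rule cSup_upper)
  moreover have "dist_pairs 1 (?g ` A') (?g ` B') = dist_pairs d A' B'"
    using dist_pairs_scaleR[of "inverse d" d A' B'] assms(1) by simp
  moreover have "dist_pairs d A B \<le> dist_pairs d A' B'"
    using A' B' by (intro dist_pairs_mono) auto
  ultimately show ?thesis by simp
qed

lemma C4_le_two_mult_dist_pairs:
  assumes "finite R1" "finite R2" "finite R4" "finite R5"
  shows "C4 d1 d2 d3 d4 R1 R2 R3 R4 R5 \<le> 2 * dist_pairs d1 R1 R2 * dist_pairs d4 R4 R5"
proof -
  define E1 where "E1 = {(a, b). a \<in> R1 \<and> b \<in> R2 \<and> norm (a - b) = d1}"
  define E4 where "E4 = {(a, b). a \<in> R4 \<and> b \<in> R5 \<and> norm (a - b) = d4}"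
  define P where "P = {(p1, p2, p3, p4, p5).
      p1 \<in> R1 \<and> p2 \<in> R2 \<and> p3 \<in> R3 \<and> p4 \<in> R4 \<and> p5 \<in> R5 \<and>
      norm (p1 - p2) = d1 \<and> norm (p2 - p3) = d2 \<and> norm (p3 - p4) = d3 \<and> norm (p4 - p5) = d4 \<and>
      distinct [p1, p2, p3, p4, p5]}"
  define ends :: "pt \<times> pt \<times> pt \<times> pt \<times> pt \<Rightarrow> (pt \<times> pt) \<times> (pt \<times> pt)"
    where "ends = (\<lambda>(p1, p2, p3, p4, p5). ((p1, p2), (p4, p5)))"
  define fibre where "fibre e = {t \<in> P. ends t = e}" for e
  have card_fibre: "card (fibre e) \<le> 2" for e
  proof -
    obtain p1 p2 p4 p5 where e: "e = ((p1, p2), (p4, p5))" by (metis prod.exhaust)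
    show ?thesis
    proof (cases "p2 = p4")
      case True
      then have "fibre e = {}" by (auto simp: fibre_def e ends_def P_def)
      then show ?thesis by (metis card.empty zero_le)
    next
      case False
      let ?S = "{x. norm (x - p2) = d2 \<and> norm (x - p4) = d3}"
      have "fibre e \<subseteq> (\<lambda>x. (p1, p2, x, p4, p5)) ` ?S"
        by (auto simp: fibre_def e ends_def P_def norm_minus_commute)
      then have "card (fibre e) \<le> card ?S"
        using finite_card_two_circles_inter(1)[OF False] by (meson card_image_le card_mono finite_imageI order_trans)
      with finite_card_two_circles_inter(2)[OF False, of d2 d3] show ?thesis by linarith
    qed
  qed
  have "P = (\<Union>e \<in> E1 \<times> E4. fibre e)"
    by (auto simp: fibre_def ends_def P_def E1_def E4_def)
  moreover have "finite (E1 \<times> E4)"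
    using assms by (simp add: E1_def E4_def finite_dist_pairs_set)
  ultimately have "card P \<le> (\<Sum>e \<in> E1 \<times> E4. card (fibre e))"
    using card_UN_le by metis
  also have "\<dots> \<le> (\<Sum>e \<in> E1 \<times> E4. 2)" by (rule sum_mono) (rule card_fibre)
  also have "\<dots> = 2 * card E1 * card E4" by (simp add: card_cartesian_product)
  finally show ?thesis unfolding C4_def dist_pairs_def P_def E1_def E4_def .
qed

lemma mult_le_if_either_factor_le:
  fixes x y u k :: real
  assumes "0 \<le> x" "0 \<le> y" "x \<le> u" "y \<le> u" and "x \<le> k \<or> y \<le> k"
  shows "x * y \<le> k * u"
  using assms(5)
proof
  assume "x \<le> k"
  then show ?thesis using assms(1-4) by (intro mult_mono) auto
next
  assume "y \<le> k"
  then have "y * x \<le> k * u" using assms(1-4) by (intro mult_mono) auto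
  then show ?thesis by (simp add: mult.commute)
qed

theorem lemma3p5:
  fixes d1 d2 d3 d4 :: real
  assumes "d1 > 0" "d2 > 0" "d3 > 0" "d4 > 0"
  shows "\<forall>K::real. \<exists>C::real. \<forall>(n::nat) (R1::pt set) R2 R3 R4 R5.
     finite R1 \<and> finite R2 \<and> finite R3 \<and> finite R4 \<and> finite R5 \<and>
     card R1 \<le> n \<and> card R2 \<le> n \<and> card R3 \<le> n \<and> card R4 \<le> n \<and> card R5 \<le> n \<and>
     (real (dist_pairs d1 R1 R2) \<le> K * real n \<or> real (dist_pairs d4 R4 R5) \<le> K * real n)
     \<longrightarrow> real (C4 d1 d2 d3 d4 R1 R2 R3 R4 R5) \<le> C * real n * real (u2 n n)"
proof (rule allI, rule_tac x = "2 * \<bar>K\<bar>" in exI, intro allI impI, elim conjE)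
  fix K :: real and n :: nat and R1 R2 R3 R4 R5 :: "pt set"
  assume fin: "finite R1" "finite R2" "finite R3" "finite R4" "finite R5"
    and card: "card R1 \<le> n" "card R2 \<le> n" "card R3 \<le> n" "card R4 \<le> n" "card R5 \<le> n"
    and small: "real (dist_pairs d1 R1 R2) \<le> K * real n \<or> real (dist_pairs d4 R4 R5) \<le> K * real n"
  let ?E1 = "real (dist_pairs d1 R1 R2)" and ?E4 = "real (dist_pairs d4 R4 R5)"
  have "dist_pairs d1 R1 R2 \<le> u2 n n" "dist_pairs d4 R4 R5 \<le> u2 n n"
    using dist_pairs_le_u2 assms(1,4) fin card by blast+
  moreover have "?E1 \<le> \<bar>K\<bar> * real n \<or> ?E4 \<le> \<bar>K\<bar> * real n"
    using small mult_right_mono[OF abs_ge_self[of K], of "real n"] by linarith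
  ultimately have "?E1 * ?E4 \<le> \<bar>K\<bar> * real n * real (u2 n n)"
    by (intro mult_le_if_either_factor_le) simp_all
  moreover have "real (C4 d1 d2 d3 d4 R1 R2 R3 R4 R5) \<le> 2 * ?E1 * ?E4"
    using of_nat_mono[OF C4_le_two_mult_dist_pairs[OF fin(1,2,4,5)]] by simp
  ultimately show "real (C4 d1 d2 d3 d4 R1 R2 R3 R4 R5) \<le> 2 * \<bar>K\<bar> * real n * real (u2 n n)"
    by linarith
qed

end
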